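(* Let $n_1,n_2,n_3\ge2$, $r\ge1$, $b>0$, $\beta\ge3$ and $\vartheta=2^{\lceil\beta\log_2(n_1\vee n_2)\rceil}$. Let $\mathcal{A}^*\in\mathbb{R}_+^{n_1\times r\times n_3}$ with $0\le\mathcal{A}^*_{ijk}\le1$, $\mathcal{B}^*\in\mathbb{R}_+^{r\times n_2\times n_3}$ with $0\le\mathcal{B}^*_{ijk}\le b$, and $\mathcal{X}^*=\mathcal{A}^*\diamond\mathcal{B}^*$. Let $\widetilde{\mathcal{A}}^*\in\mathfrak{L}$ be obtained by replacing each entry of $\mathcal{A}^*$ by its closest discretization level, and $\widetilde{\mathcal{B}}^*\in\mathfrak{D}$ be obtained by replacing each nonzero entry of $\mathcal{B}^*$ by its closest discretization level in $[0,b]$ and keeping zero entries zero. Then $\widetilde{\mathcal{X}}^*=\widetilde{\mathcal{A}}^*\diamond\widetilde{\mathcal{B}}^*$ satisfies \[ \|\widetilde{\mathcal{X}}^*-\mathcal{X}^*\|_\infty\le\frac{3rn_3b}{\vartheta}. \]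
   Context: Tensor-tensor product $\diamond$: for $\mathcal{X}\in\mathbb{R}^{n_1\times n_2\times n_3}$ with frontal slices $\mathbf{X}^{(1)},\dots,\mathbf{X}^{(n_3)}$ and $\mathcal{Y}\in\mathbb{R}^{n_2\times n_4\times n_3}$, $\mathcal{X}\diamond\mathcal{Y}$ is obtained by multiplying the block-circulant matrix with $(p,q)$ block $\mathbf{X}^{((p-q)\bmod n_3+1)}$ by the vertical stack of the frontal slices of $\mathcal{Y}$ and folding back. $\|\mathcal{X}\|_\infty=\max_{i,j,k}|\mathcal{X}_{ijk}|$; $m\vee n=\max\{m,n\}$. $\mathfrak{L}$ is the set of tensors in $\mathbb{R}_+^{n_1\times r\times n_3}$ whose entries each equal one of the $\vartheta$ uniformly spaced levels $\{0,\frac{1}{\vartheta-1},\dots,1\}$ of $[0,1]$; $\mathfrak{D}$ is the set of tensors in $\mathbb{R}_+^{r\times n_2\times n_3}$ whose entries are each either $0$ or one of the $\vartheta$ uniformly spaced levels $\{0,\frac{b}{\vartheta-1},\dots,b\}$ of $[0,b]$. *)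

theory Defs
  imports Complex_Main
begin

text \<open>Third-order tensors are represented as functions nat => nat => nat => real,
  with entries outside the index ranges irrelevant (0-based indices).\<close>

text \<open>Tensor-tensor product: X is n1 x n2 x n3, Y is n2 x n4 x n3.
  Frontal slice k of the result is  sum_q X^((k-q) mod n3) Y^(q).\<close>
definition tprod :: "nat \<Rightarrow> nat \<Rightarrow> (nat \<Rightarrow> nat \<Rightarrow> nat \<Rightarrow> real)
    \<Rightarrow> (nat \<Rightarrow> nat \<Rightarrow> nat \<Rightarrow> real) \<Rightarrow> (nat \<Rightarrow> nat \<Rightarrow> nat \<Rightarrow> real)" where
  "tprod n2 n3 X Y = (\<lambda>i l k. \<Sum>j<n2. \<Sum>q<n3. X i j ((k + n3 - q) mod n3) * Y j l q)"

definition tinf_norm :: "nat \<Rightarrow> nat \<Rightarrow> nat \<Rightarrow> (nat \<Rightarrow> nat \<Rightarrow> nat \<Rightarrow> real) \<Rightarrow> real" where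
  "tinf_norm n1 n2 n3 X = Max {\<bar>X i j k\<bar> | i j k. i < n1 \<and> j < n2 \<and> k < n3}"

definition levels :: "nat \<Rightarrow> real \<Rightarrow> real set" where
  "levels \<theta> c = {real t * c / (real \<theta> - 1) | t. t < \<theta>}"

definition closest_level :: "nat \<Rightarrow> real \<Rightarrow> real \<Rightarrow> real \<Rightarrow> bool" where
  "closest_level \<theta> c x y \<longleftrightarrow> y \<in> levels \<theta> c \<and> (\<forall>z \<in> levels \<theta> c. \<bar>y - x\<bar> \<le> \<bar>z - x\<bar>)"

end

theory Submission imports Defs begin

text \<open>Rounding moves every entry of \<open>A\<close> and \<open>B\<close> by at most half a level spacing, i.e. by
  \<open>1/(2(\<theta>-1))\<close> resp. \<open>b/(2(\<theta>-1))\<close>. Since the rounded entries of \<open>A\<close> stay in \<open>[0,1]\<close> and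
  those of \<open>B\<close> in \<open>[0,b]\<close>, every product of entries moves by at most \<open>b/(\<theta>-1) \<le> 2b/\<theta>\<close>,
  and every entry of the t-product is a sum of \<open>r n\<^sub>3\<close> such products.\<close>

lemma levels_nonneg_le:
  assumes "c \<ge> 0" and "y \<in> levels \<theta> c"
  shows "0 \<le> y" and "y \<le> c"
proof -
  from assms(2) obtain t where t: "t < \<theta>" "y = real t * c / (real \<theta> - 1)"
    unfolding levels_def by auto
  show "0 \<le> y" using t assms(1) by simp
  show "y \<le> c"
  proof (cases "\<theta> = 1")
    case False
    then have "real t \<le> real \<theta> - 1" "real \<theta> - 1 > 0" using t(1) by linarith+
    then have "y \<le> (real \<theta> - 1) * c / (real \<theta> - 1)"
      unfolding t(2) using assms(1) by (intro divide_right_mono mult_right_mono) auto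
    then show ?thesis using \<open>real \<theta> - 1 > 0\<close> by simp
  qed (use t assms(1) in simp)
qed

lemma closest_level_dist_le:
  assumes "\<theta> \<ge> 2" and "c > 0" and "0 \<le> x" and "x \<le> c"
    and "closest_level \<theta> c x y"
  shows "\<bar>y - x\<bar> \<le> c / (2 * (real \<theta> - 1))"
proof -
  define h where "h = c / (real \<theta> - 1)"
  have "h > 0" using assms(1,2) by (simp add: h_def)
  define t where "t = nat (round (x / h))"
  have round_nonneg: "round (x / h) \<ge> 0"
    using round_mono[of 0 "x / h"] assms(3) \<open>h > 0\<close> by simp
  have "x * (real \<theta> - 1) \<le> (real \<theta> - 1) * c"
    using assms(1,4) by (subst mult.commute) (intro mult_right_mono, auto)
  then have "x / h \<le> real_of_int (int \<theta> - 1)"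
    using assms(1,2) by (simp add: h_def divide_le_eq of_nat_diff)
  then have "round (x / h) \<le> int \<theta> - 1"
    using round_mono round_of_int by metis
  then have "t < \<theta>" using round_nonneg assms(1) unfolding t_def by linarith
  then have "real t * h \<in> levels \<theta> c" unfolding levels_def h_def by auto
  then have "\<bar>y - x\<bar> \<le> \<bar>real t * h - x\<bar>"
    using assms(5) unfolding closest_level_def by blast
  also have "real t * h - x = (of_int (round (x / h)) - x / h) * h"
    using \<open>h > 0\<close> round_nonneg by (simp add: t_def field_simps)
  also have "\<bar>\<dots>\<bar> \<le> 1/2 * h"
    unfolding abs_mult using \<open>h > 0\<close> of_int_round_abs_le[of "x / h"]
    by (simp add: mult_right_mono)
  finally show ?thesis by (simp add: h_def)
qed

lemma abs_mult_diff_le: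
  fixes a a' b b' :: "'a::linordered_idom"
  assumes "\<bar>a'\<bar> \<le> 1" and "\<bar>a' - a\<bar> \<le> \<delta>" and "\<bar>b' - b\<bar> \<le> \<epsilon>" and "\<bar>b\<bar> \<le> c"
  shows "\<bar>a' * b' - a * b\<bar> \<le> \<epsilon> + \<delta> * c"
proof -
  have "a' * b' - a * b = a' * (b' - b) + (a' - a) * b"
    by (simp add: algebra_simps)
  then have "\<bar>a' * b' - a * b\<bar> \<le> \<bar>a'\<bar> * \<bar>b' - b\<bar> + \<bar>a' - a\<bar> * \<bar>b\<bar>"
    by (metis abs_mult abs_triangle_ineq)
  also have "\<dots> \<le> 1 * \<epsilon> + \<delta> * c"
    using assms by (intro add_mono mult_mono) auto
  finally show ?thesis by simp
qed

lemma abs_tprod_diff_le: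
  assumes "\<And>j m q. j < n2 \<Longrightarrow> m < n3 \<Longrightarrow> q < n3 \<Longrightarrow>
      \<bar>X' i j m * Y' j l q - X i j m * Y j l q\<bar> \<le> e"
  shows "\<bar>tprod n2 n3 X' Y' i l k - tprod n2 n3 X Y i l k\<bar> \<le> real n2 * real n3 * e"
proof -
  let ?m = "\<lambda>q. (k + n3 - q) mod n3"
  have "\<bar>tprod n2 n3 X' Y' i l k - tprod n2 n3 X Y i l k\<bar>
      = \<bar>\<Sum>j<n2. \<Sum>q<n3. X' i j (?m q) * Y' j l q - X i j (?m q) * Y j l q\<bar>"
    unfolding tprod_def by (simp add: sum_subtractf)
  also have "\<dots> \<le> (\<Sum>j<n2. \<Sum>q<n3. \<bar>X' i j (?m q) * Y' j l q - X i j (?m q) * Y j l q\<bar>)"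
    by (rule order_trans[OF sum_abs sum_mono]) (rule sum_abs)
  also have "\<dots> \<le> (\<Sum>j<n2. \<Sum>q<n3. e)"
    using assms by (intro sum_mono) auto
  finally show ?thesis by simp
qed

lemma tinf_norm_le:
  assumes "n1 > 0" and "n2 > 0" and "n3 > 0"
    and "\<And>i j k. i < n1 \<Longrightarrow> j < n2 \<Longrightarrow> k < n3 \<Longrightarrow> \<bar>X i j k\<bar> \<le> M"
  shows "tinf_norm n1 n2 n3 X \<le> M"
proof -
  have entries: "{\<bar>X i j k\<bar> | i j k. i < n1 \<and> j < n2 \<and> k < n3}
      = (\<lambda>(i, j, k). \<bar>X i j k\<bar>) ` ({..<n1} \<times> {..<n2} \<times> {..<n3})"
    by force
  show ?thesis
    unfolding tinf_norm_def entries using assms by (subst Max_le_iff) auto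
qed

lemma two_le_two_power_ceiling:
  assumes "x > 0"
  shows "2 \<le> (2::nat) ^ nat \<lceil>x\<rceil>"
proof -
  have "\<lceil>x\<rceil> > 0" using assms by simp
  then have "nat \<lceil>x\<rceil> \<ge> 1" by linarith
  then show ?thesis using power_increasing[of 1 "nat \<lceil>x\<rceil>" "2::nat"] by simp
qed

lemma abs_rounded_mult_diff_le:
  assumes "\<theta> \<ge> 2" and "b > 0" and "0 \<le> u" and "u \<le> 1" and "0 \<le> v" and "v \<le> b"
    and "closest_level \<theta> 1 u u'"
    and "if v = 0 then v' = 0 else closest_level \<theta> b v v'"
  shows "\<bar>u' * v' - u * v\<bar> \<le> b / (real \<theta> - 1)"
proof -
  have "\<bar>u'\<bar> \<le> 1"
    using assms(7) levels_nonneg_le[of 1 u' \<theta>] unfolding closest_level_def by simp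
  moreover have "\<bar>u' - u\<bar> \<le> 1 / (2 * (real \<theta> - 1))"
    using closest_level_dist_le[OF assms(1) _ assms(3,4,7)] by simp
  moreover have "\<bar>v' - v\<bar> \<le> b / (2 * (real \<theta> - 1))"
    using assms(1,2,8) closest_level_dist_le[OF assms(1,2,5,6)] by (auto split: if_splits)
  moreover have "\<bar>v\<bar> \<le> b" using assms(5,6) by simp
  ultimately have "\<bar>u' * v' - u * v\<bar> \<le> b / (2 * (real \<theta> - 1)) + 1 / (2 * (real \<theta> - 1)) * b"
    by (rule abs_mult_diff_le)
  also have "\<dots> = b / (real \<theta> - 1)"
    by (metis add_divide_distrib mult_2 times_divide_eq_left mult_1
        mult_divide_mult_cancel_left_if zero_neq_numeral)
  finally show ?thesis .
qed

theorem lemma2: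
  fixes n1 n2 n3 r :: nat and b \<beta> :: real and \<theta> :: nat
    and A B At Bt :: "nat \<Rightarrow> nat \<Rightarrow> nat \<Rightarrow> real"
  assumes "n1 \<ge> 2" and "n2 \<ge> 2" and "n3 \<ge> 2" and "r \<ge> 1"
    and "b > 0" and "\<beta> \<ge> 3"
    and "\<theta> = 2 ^ nat \<lceil>\<beta> * log 2 (real (max n1 n2))\<rceil>"
    and "\<And>i j k. i < n1 \<Longrightarrow> j < r \<Longrightarrow> k < n3 \<Longrightarrow> 0 \<le> A i j k \<and> A i j k \<le> 1"
    and "\<And>i j k. i < r \<Longrightarrow> j < n2 \<Longrightarrow> k < n3 \<Longrightarrow> 0 \<le> B i j k \<and> B i j k \<le> b"
    and "\<And>i j k. i < n1 \<Longrightarrow> j < r \<Longrightarrow> k < n3 \<Longrightarrow> closest_level \<theta> 1 (A i j k) (At i j k)"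
    and "\<And>i j k. i < r \<Longrightarrow> j < n2 \<Longrightarrow> k < n3 \<Longrightarrow>
           (if B i j k = 0 then Bt i j k = 0 else closest_level \<theta> b (B i j k) (Bt i j k))"
  shows "tinf_norm n1 n2 n3 (\<lambda>i j k. tprod r n3 At Bt i j k - tprod r n3 A B i j k)
           \<le> 3 * real r * real n3 * b / real \<theta>"
proof -
  have "\<beta> * log 2 (real (max n1 n2)) > 0" using assms(1,6) by simp
  then have "\<theta> \<ge> 2" using assms(7) two_le_two_power_ceiling by simp
  have "tinf_norm n1 n2 n3 (\<lambda>i j k. tprod r n3 At Bt i j k - tprod r n3 A B i j k)
      \<le> real r * real n3 * (b / (real \<theta> - 1))"
    using assms(1-3) by (intro tinf_norm_le abs_tprod_diff_le
        abs_rounded_mult_diff_le[OF \<open>\<theta> \<ge> 2\<close> assms(5)]) (use assms(8-11) in auto)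
  also have "\<dots> \<le> real r * real n3 * (3 * b / real \<theta>)"
    using \<open>\<theta> \<ge> 2\<close> assms(5) by (intro mult_left_mono) (auto simp: field_simps)
  finally show ?thesis by (simp add: mult_ac)
qed

end
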